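(* Let $A,B$ be R$^*$-algebras and let $\phi\colon A\to B$ be a linear map such that $\phi(p)$ is a projection of $B$ for every projection $p$ of $A$. Then $\phi$ is a Jordan $^*$-homomorphism, i.e., $\phi(x^* )=\phi(x)^*$ and $\phi(x^2)=\phi(x)^2$ for all $x\in A$.
   Context: An R$^*$-algebra is a (not necessarily closed, not necessarily unital) $^*$-subalgebra of $B(H)$, $H$ a complex Hilbert space, in which every self-adjoint element has finite spectrum. A projection is an element $p$ with $p=p^2=p^*$. *)

theory Defs
  imports "HOL-Analysis.Analysis"
begin

text \<open>A complex inner product space: a real inner product space with a complex scalar
multiplication extending the real one and a complex inner product (conjugate-linear in the
first argument) whose real part is the underlying real inner product (so the norm is
\<open>sqrt (Re (cinner x x))\<close>).\<close>

class complex_inner = real_inner +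
  fixes scaleC :: "complex \<Rightarrow> 'a \<Rightarrow> 'a"
    and cinner :: "'a \<Rightarrow> 'a \<Rightarrow> complex"
  assumes scaleC_of_real: "scaleC (of_real r) x = scaleR r x"
    and scaleC_add_left: "scaleC (a + b) x = scaleC a x + scaleC b x"
    and scaleC_add_right: "scaleC a (x + y) = scaleC a x + scaleC a y"
    and scaleC_scaleC: "scaleC a (scaleC b x) = scaleC (a * b) x"
    and cinner_add_left: "cinner (x + y) z = cinner x z + cinner y z"
    and cinner_scaleC_left: "cinner (scaleC a x) y = cnj a * cinner x y"
    and cinner_commute: "cinner y x = cnj (cinner x y)"
    and Re_cinner: "Re (cinner x y) = inner x y"

class complex_hilbert = complex_inner + complete_space

definition bounded_op :: "('a::complex_hilbert \<Rightarrow> 'a) \<Rightarrow> bool" where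
  "bounded_op T \<longleftrightarrow>
     (\<forall>x y. T (x + y) = T x + T y) \<and>
     (\<forall>c x. T (scaleC c x) = scaleC c (T x)) \<and>
     (\<exists>K. \<forall>x. norm (T x) \<le> K * norm x)"

definition BH :: "('a::complex_hilbert \<Rightarrow> 'a) set" where
  "BH = {T. bounded_op T}"

text \<open>Hilbert space adjoint (exists uniquely for bounded operators).\<close>
definition adj :: "('a::complex_hilbert \<Rightarrow> 'a) \<Rightarrow> ('a \<Rightarrow> 'a)" where
  "adj T = (SOME S. \<forall>x y. cinner (T x) y = cinner x (S y))"

text \<open>Spectrum of an operator, computed in B(H).\<close>
definition op_spectrum :: "('a::complex_hilbert \<Rightarrow> 'a) \<Rightarrow> complex set" where
  "op_spectrum T = {l. \<not> (\<exists>S\<in>BH.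
       S \<circ> (\<lambda>x. T x - scaleC l x) = id \<and> (\<lambda>x. T x - scaleC l x) \<circ> S = id)}"

definition star_subalgebra :: "('a::complex_hilbert \<Rightarrow> 'a) set \<Rightarrow> bool" where
  "star_subalgebra A \<longleftrightarrow> A \<subseteq> BH \<and> (\<lambda>x. 0) \<in> A \<and>
     (\<forall>S\<in>A. \<forall>T\<in>A. (\<lambda>x. S x + T x) \<in> A) \<and>
     (\<forall>c. \<forall>T\<in>A. (\<lambda>x. scaleC c (T x)) \<in> A) \<and>
     (\<forall>S\<in>A. \<forall>T\<in>A. S \<circ> T \<in> A) \<and>
     (\<forall>T\<in>A. adj T \<in> A)"

definition R_star_algebra :: "('a::complex_hilbert \<Rightarrow> 'a) set \<Rightarrow> bool" where
  "R_star_algebra A \<longleftrightarrow> star_subalgebra A \<and>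
     (\<forall>T\<in>A. adj T = T \<longrightarrow> finite (op_spectrum T))"

definition is_projection :: "('a::complex_hilbert \<Rightarrow> 'a) \<Rightarrow> bool" where
  "is_projection p \<longleftrightarrow> p \<circ> p = p \<and> adj p = p"

definition linear_on_ops ::
  "('a::complex_hilbert \<Rightarrow> 'a) set \<Rightarrow> (('a \<Rightarrow> 'a) \<Rightarrow> ('b::complex_hilbert \<Rightarrow> 'b)) \<Rightarrow> bool" where
  "linear_on_ops A \<phi> \<longleftrightarrow>
     (\<forall>S\<in>A. \<forall>T\<in>A. \<phi> (\<lambda>x. S x + T x) = (\<lambda>y. \<phi> S y + \<phi> T y)) \<and>
     (\<forall>c. \<forall>T\<in>A. \<phi> (\<lambda>x. scaleC c (T x)) = (\<lambda>y. scaleC c (\<phi> T y)))"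

end

theory Submission
  imports Defs "HOL-Computational_Algebra.Fundamental_Theorem_Algebra"
begin

text \<open>A self-adjoint \<open>T\<close> in an R*-algebra \<open>A\<close> has finite spectrum \<open>\<sigma>\<close>. For
  \<open>m = \<Prod>z\<in>\<sigma>. X - z\<close>, spectral mapping and the fact that the supremum of the numerical range of a
  self-adjoint operator lies in its spectrum give \<open>m(T) = 0\<close>. The Lagrange polynomials of \<open>\<sigma>\<close>
  then write \<open>T = \<Sum>z. z \<cdot> e\<^sub>z\<close> with pairwise orthogonal projections \<open>e\<^sub>z\<close>, where
  \<open>e\<^sub>z = T e\<^sub>z / z\<close> lies in \<open>A\<close> for \<open>z \<noteq> 0\<close>.
  A linear \<open>\<phi>\<close> preserving projections preserves orthogonality of projections, since \<open>p + q\<close> is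
  a projection iff \<open>p q = q p = 0\<close>. Hence \<open>\<phi> T = \<Sum>z. z \<cdot> \<phi> e\<^sub>z\<close> is self-adjoint with
  \<open>\<phi> (T\<^sup>2) = (\<phi> T)\<^sup>2\<close>. A general \<open>x\<close> is \<open>a + i b\<close> with \<open>a\<close>, \<open>b\<close> self-adjoint, and the
  polarisation \<open>a b + b a = (a + b)\<^sup>2 - a\<^sup>2 - b\<^sup>2\<close> finishes the proof.
  Adjoints of bounded operators come from the Riesz representation theorem.\<close>

interpretation complex_vector: vector_space "scaleC :: complex \<Rightarrow> 'a \<Rightarrow> 'a::complex_inner"
proof unfold_locales
  show "scaleC 1 x = x" for x :: 'a
    using scaleC_of_real[of 1 x] by simp
qed (simp_all add: scaleC_add_right scaleC_add_left scaleC_scaleC)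

lemma cinner_add_right: "cinner x (y + z) = cinner x y + cinner x z"
  by (subst (1 2 3) cinner_commute) (simp add: cinner_add_left)

lemma cinner_scaleC_right: "cinner x (scaleC a y) = a * cinner x y"
  by (subst (1 2) cinner_commute) (simp add: cinner_scaleC_left)

lemma additive_cinner_left: "Modules.additive (\<lambda>x. cinner x y)"
  by standard (rule cinner_add_left)

lemma additive_cinner_right: "Modules.additive (\<lambda>y. cinner x y)"
  by standard (rule cinner_add_right)

lemmas cinner_zero_left [simp] = Modules.additive.zero[OF additive_cinner_left]
lemmas cinner_zero_right [simp] = Modules.additive.zero[OF additive_cinner_right]
lemmas cinner_diff_right = Modules.additive.diff[OF additive_cinner_right]
lemmas cinner_sum_left = Modules.additive.sum[OF additive_cinner_left]
lemmas cinner_sum_right = Modules.additive.sum[OF additive_cinner_right]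

lemma cinner_self: "cinner x x = of_real (inner x x)"
proof -
  have "Im (cinner x x) = 0"
    using cinner_commute[of x x] by (metis cnj.simps(2) neg_equal_zero)
  then show ?thesis by (simp add: complex_eq_iff Re_cinner)
qed

lemma cinner_self_eq_0 [simp]: "cinner x x = 0 \<longleftrightarrow> x = 0"
  by (simp add: cinner_self)

lemma cinner_eq_Complex: "cinner x y = Complex (inner x y) (inner (scaleC \<i> x) y)"
  by (simp add: complex_eq_iff Re_cinner[symmetric] cinner_scaleC_left)

lemma norm_scaleC: "norm (scaleC a x) = cmod a * norm x"
proof -
  have "cinner (scaleC a x) (scaleC a x) = (a * cnj a) * cinner x x"
    by (simp add: cinner_scaleC_left cinner_scaleC_right mult_ac)
  also have "\<dots> = of_real ((cmod a)^2 * inner x x)"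
    by (simp add: cinner_self flip: complex_norm_square)
  finally have "inner (scaleC a x) (scaleC a x) = (cmod a)^2 * inner x x"
    using Re_cinner[of "scaleC a x" "scaleC a x"] by simp
  then show ?thesis by (simp add: norm_eq_sqrt_inner real_sqrt_mult)
qed

section \<open>The Riesz representation theorem\<close>

lemma quadratic_nonneg_discriminant:
  fixes a c d :: real
  assumes d: "d \<ge> 0" and q: "\<And>t. 0 \<le> a + 2 * t * c + t^2 * d"
  shows "c^2 \<le> a * d"
proof (cases "d = 0")
  case True
  show ?thesis
  proof (cases "c = 0")
    case False
    have "0 \<le> a + 2 * (-(a+1)/(2*c)) * c + (-(a+1)/(2*c))^2 * d" by (rule q)
    then show ?thesis using False True by (simp add: field_simps)
  qed (use True in simp)
next
  case False
  then have "d > 0" using d by simp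
  moreover have "0 \<le> a + 2 * (-c/d) * c + (-c/d)^2 * d" by (rule q)
  ultimately show ?thesis by (simp add: field_simps power2_eq_square)
qed

lemma subspace_minimizing_sequence_Cauchy:
  fixes N :: "'a::real_inner set"
  assumes N: "subspace N" and s: "\<And>k. s k \<in> N"
    and D_le: "\<And>n. n \<in> N \<Longrightarrow> D \<le> (norm (x - n))^2"
    and s_le: "\<And>k. (norm (x - s k))^2 < D + inverse (real (Suc k))"
  shows "Cauchy s"
proof (rule metric_CauchyI)
  \<comment> \<open>parallelogram law, using that the midpoint of \<open>s j\<close> and \<open>s k\<close> lies in \<open>N\<close>\<close>
  have close: "(norm (s j - s k))^2 \<le> 2 * inverse (real (Suc j)) + 2 * inverse (real (Suc k))" for j k
  proof -
    define m where "m = (1/2) *\<^sub>R (s j + s k)"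
    have "m \<in> N" unfolding m_def using s N by (intro subspace_scale subspace_add)
    then have "D \<le> (norm (x - m))^2" by (rule D_le)
    moreover have "(norm (s j - s k))^2 + 4 * (norm (x - m))^2 =
        2 * (norm (x - s k))^2 + 2 * (norm (x - s j))^2"
      unfolding m_def power2_norm_eq_inner by (simp add: algebra_simps inner_commute)
    ultimately show ?thesis using s_le[of j] s_le[of k] by linarith
  qed
  fix e :: real assume "e > 0"
  then obtain M where M: "inverse (real (Suc M)) < e^2/4"
    using reals_Archimedean[of "e^2/4"] by auto
  have "dist (s m) (s n) < e" if "M \<le> m" "M \<le> n" for m n
  proof -
    have "inverse (real (Suc m)) \<le> inverse (real (Suc M))"
      "inverse (real (Suc n)) \<le> inverse (real (Suc M))"
      using that by (auto simp: field_simps)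
    then have "(norm (s m - s n))^2 < e^2"
      using close[of m n] M by linarith
    then have "(dist (s m) (s n))^2 < e^2" by (simp add: dist_norm)
    then show ?thesis using \<open>e > 0\<close> by (simp add: power_less_imp_less_base)
  qed
  then show "\<exists>M. \<forall>m\<ge>M. \<forall>n\<ge>M. dist (s m) (s n) < e" by blast
qed

lemma subspace_nearest_point_exists:
  fixes N :: "'a::{real_inner,complete_space} set"
  assumes N: "subspace N" and closed: "closed N"
  obtains y where "y \<in> N" "\<And>n. n \<in> N \<Longrightarrow> norm (x - y) \<le> norm (x - n)"
proof -
  define Q where "Q = (\<lambda>n. (norm (x - n))^2)"
  define D where "D = Inf (Q ` N)"
  have bdd: "bdd_below (Q ` N)" unfolding Q_def by (rule bdd_belowI[of _ 0]) auto
  have D_le: "D \<le> Q n" if "n \<in> N" for n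
    unfolding D_def using that bdd by (auto intro: cInf_lower)
  have "N \<noteq> {}" using subspace_0[OF N] by blast
  have "\<exists>n\<in>N. Q n < D + inverse (real (Suc k))" for k
  proof -
    have "Inf (Q ` N) < D + inverse (real (Suc k))" unfolding D_def by simp
    then show ?thesis using cInf_less_iff[OF _ bdd] \<open>N \<noteq> {}\<close> by auto
  qed
  then obtain s where s: "\<And>k. s k \<in> N" "\<And>k. Q (s k) < D + inverse (real (Suc k))"
    by metis
  have "Cauchy s"
    using D_le s(2) unfolding Q_def by (rule subspace_minimizing_sequence_Cauchy[OF N s(1)])
  then obtain y where y: "s \<longlonglongrightarrow> y" using Cauchy_convergent_iff convergent_def by blast
  have "Q y \<le> D"
  proof (rule LIMSEQ_le)
    show "(\<lambda>k. Q (s k)) \<longlonglongrightarrow> Q y" unfolding Q_def by (intro tendsto_intros y)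
    show "(\<lambda>k. D + inverse (real (Suc k))) \<longlonglongrightarrow> D"
      using tendsto_add[OF tendsto_const LIMSEQ_inverse_real_of_nat, of D] by simp
    show "\<exists>N. \<forall>n\<ge>N. Q (s n) \<le> D + inverse (real (Suc n))" using s(2) less_imp_le by blast
  qed
  have "norm (x - y) \<le> norm (x - n)" if "n \<in> N" for n
  proof (rule power2_le_imp_le)
    show "(norm (x - y))^2 \<le> (norm (x - n))^2"
      using \<open>Q y \<le> D\<close> D_le[OF that] unfolding Q_def by linarith
  qed simp
  moreover have "y \<in> N" using closed_sequentially[OF closed s(1) y] .
  ultimately show ?thesis using that by blast
qed

lemma nearest_point_orthogonal:
  fixes N :: "'a::real_inner set"
  assumes N: "subspace N" and "y \<in> N" "n \<in> N"
    and nearest: "\<And>n. n \<in> N \<Longrightarrow> norm (x - y) \<le> norm (x - n)"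
  shows "inner (x - y) n = 0"
proof -
  define z where "z = x - y"
  have "0 \<le> 0 + 2 * t * (- inner z n) + t^2 * inner n n" for t
  proof -
    have "y + t *\<^sub>R n \<in> N" using assms by (intro subspace_add subspace_scale)
    then have "norm z \<le> norm (z - t *\<^sub>R n)"
      using nearest unfolding z_def by (simp add: diff_diff_eq)
    then have "inner z z \<le> inner (z - t *\<^sub>R n) (z - t *\<^sub>R n)"
      by (simp add: power_mono flip: power2_norm_eq_inner)
    then show ?thesis
      by (simp add: inner_commute power2_eq_square algebra_simps)
  qed
  from quadratic_nonneg_discriminant[OF _ this] show ?thesis unfolding z_def by simp
qed

lemma riesz_representation_real:
  fixes g :: "'a::{real_inner,complete_space} \<Rightarrow> real"
  assumes g: "bounded_linear g"
  obtains w where "\<And>x. g x = inner x w"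
proof (cases "\<forall>x. g x = 0")
  case True
  then show ?thesis using that[of 0] by simp
next
  case False
  then obtain x0 where x0: "g x0 \<noteq> 0" by blast
  interpret g: bounded_linear g by fact
  define N where "N = {x. g x = 0}"
  have N: "subspace N" unfolding N_def using g.linear_axioms by (rule real_vector.linear_subspace_kernel)
  have "closed N" unfolding N_def
    by (intro closed_Collect_eq linear_continuous_on g continuous_on_const)
  then obtain n0 where n0: "n0 \<in> N" "\<And>n. n \<in> N \<Longrightarrow> norm (x0 - n0) \<le> norm (x0 - n)"
    using subspace_nearest_point_exists[OF N] by blast
  define z where "z = x0 - n0"
  have gz: "g z = g x0" using n0(1) unfolding z_def N_def by (simp add: g.diff)
  then have "inner z z \<noteq> 0" using x0 by auto
  have orth: "inner z x = (g x / g z) * inner z z" for x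
  proof -
    have "x - (g x / g z) *\<^sub>R z \<in> N" unfolding N_def using x0 gz by (simp add: g.diff g.scale)
    then have "inner z (x - (g x / g z) *\<^sub>R z) = 0"
      unfolding z_def by (rule nearest_point_orthogonal[OF N n0(1) _ n0(2)])
    then show ?thesis by (simp add: inner_diff_right)
  qed
  have "inner x ((g z / inner z z) *\<^sub>R z) = g x" for x
  proof -
    have "inner x ((g z / inner z z) *\<^sub>R z) = (g z / inner z z) * ((g x / g z) * inner z z)"
      using orth[of x] by (simp add: inner_commute)
    also have "\<dots> = g x" using \<open>inner z z \<noteq> 0\<close> x0 gz by (simp add: field_simps)
    finally show ?thesis .
  qed
  then show ?thesis using that by metis
qed

lemma bounded_op_add: "bounded_op T \<Longrightarrow> T (x + y) = T x + T y"
  unfolding bounded_op_def by blast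

lemma bounded_op_scaleC: "bounded_op T \<Longrightarrow> T (scaleC c x) = scaleC c (T x)"
  unfolding bounded_op_def by blast

lemma bounded_op_additive: "bounded_op T \<Longrightarrow> Modules.additive T"
  by standard (rule bounded_op_add)

lemmas bounded_op_zero = Modules.additive.zero[OF bounded_op_additive]
lemmas bounded_op_sum = Modules.additive.sum[OF bounded_op_additive]

lemma bounded_op_scaleR: "bounded_op T \<Longrightarrow> T (r *\<^sub>R x) = r *\<^sub>R T x"
  using bounded_op_scaleC[of T "of_real r" x] by (simp add: scaleC_of_real)

lemma bounded_op_bound:
  assumes "bounded_op T"
  obtains K where "K > 0" "\<And>x. norm (T x) \<le> K * norm x"
proof -
  obtain K where K: "norm (T x) \<le> K * norm x" for x
    using assms unfolding bounded_op_def by blast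
  have "norm (T x) \<le> max K 1 * norm x" for x
    using K[of x] by (meson max.cobounded1 mult_right_mono norm_ge_zero order_trans)
  then show ?thesis using that[of "max K 1"] by simp
qed

lemma bounded_op_bounded_linear:
  assumes T: "bounded_op T"
  shows "bounded_linear T"
proof -
  obtain K where "\<And>x. norm (T x) \<le> K * norm x" using T unfolding bounded_op_def by blast
  then show ?thesis
    by (intro bounded_linear_intro[of _ K])
      (simp_all add: bounded_op_add[OF T] bounded_op_scaleR[OF T] mult.commute)
qed

lemma bounded_op_ident: "bounded_op (\<lambda>x. x)"
  unfolding bounded_op_def by (auto intro: exI[of _ 1])

lemma bounded_op_0: "bounded_op (\<lambda>x. 0)"
  unfolding bounded_op_def by (auto intro: exI[of _ 0])

lemma bounded_op_plus:
  assumes S: "bounded_op S" and T: "bounded_op T"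
  shows "bounded_op (\<lambda>x. S x + T x)"
proof -
  obtain K1 K2 where "\<And>x. norm (S x) \<le> K1 * norm x" "\<And>x. norm (T x) \<le> K2 * norm x"
    using S T unfolding bounded_op_def by blast
  then have "norm (S x + T x) \<le> (K1 + K2) * norm x" for x
    by (smt (verit, best) distrib_right norm_triangle_ineq)
  then show ?thesis unfolding bounded_op_def
    by (auto simp: bounded_op_add[OF S] bounded_op_add[OF T] bounded_op_scaleC[OF S]
        bounded_op_scaleC[OF T] complex_vector.scale_right_distrib)
qed

lemma bounded_op_scaleC_op:
  assumes T: "bounded_op T"
  shows "bounded_op (\<lambda>x. scaleC c (T x))"
proof -
  obtain K where "\<And>x. norm (T x) \<le> K * norm x" using T unfolding bounded_op_def by blast
  then have "norm (scaleC c (T x)) \<le> (cmod c * K) * norm x" for x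
    by (simp add: norm_scaleC mult.assoc mult_left_mono)
  then show ?thesis unfolding bounded_op_def
    by (auto simp: bounded_op_add[OF T] bounded_op_scaleC[OF T] complex_vector.scale_right_distrib
        complex_vector.scale_left_commute[of c])
qed

lemma bounded_op_comp:
  assumes S: "bounded_op S" and T: "bounded_op T"
  shows "bounded_op (S \<circ> T)"
proof -
  obtain K1 where "K1 > 0" "\<And>x. norm (S x) \<le> K1 * norm x" using bounded_op_bound[OF S] by blast
  moreover obtain K2 where "\<And>x. norm (T x) \<le> K2 * norm x" using T unfolding bounded_op_def by blast
  ultimately have "norm (S (T x)) \<le> (K1 * K2) * norm x" for x
    by (metis mult.assoc mult_left_mono order_trans less_imp_le)
  then show ?thesis using S T unfolding bounded_op_def by auto
qed

lemma bounded_op_minus_op: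
  assumes "bounded_op S" "bounded_op T"
  shows "bounded_op (\<lambda>x. S x - T x)"
  using bounded_op_plus[OF assms(1) bounded_op_scaleC_op[OF assms(2), of "-1"]] by simp

lemma square_plus_i:
  assumes a: "bounded_op a" and b: "bounded_op b"
  shows "(\<lambda>z. a z + scaleC \<i> (b z)) \<circ> (\<lambda>z. a z + scaleC \<i> (b z)) =
    (\<lambda>z. a (a z) - b (b z) + scaleC \<i> (a (b z) + b (a z)))"
  by (simp add: fun_eq_iff bounded_op_add[OF a] bounded_op_add[OF b] bounded_op_scaleC[OF a]
      bounded_op_scaleC[OF b] complex_vector.scale_right_distrib algebra_simps)

definition has_adjoint :: "('a::complex_inner \<Rightarrow> 'a) \<Rightarrow> ('a \<Rightarrow> 'a) \<Rightarrow> bool" where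
  "has_adjoint T S \<longleftrightarrow> (\<forall>x y. cinner (T x) y = cinner x (S y))"

lemma has_adjointD: "has_adjoint T S \<Longrightarrow> cinner (T x) y = cinner x (S y)"
  unfolding has_adjoint_def by blast

lemma has_adjoint_sym: "has_adjoint T S \<Longrightarrow> has_adjoint S T"
  unfolding has_adjoint_def by (metis cinner_commute)

lemma has_adjoint_inner: "has_adjoint T S \<Longrightarrow> inner (T x) y = inner x (S y)"
  using has_adjointD[of T S x y] by (metis Re_cinner)

lemma has_adjoint_plus:
  "has_adjoint S S' \<Longrightarrow> has_adjoint T T' \<Longrightarrow> has_adjoint (\<lambda>x. S x + T x) (\<lambda>y. S' y + T' y)"
  unfolding has_adjoint_def by (simp add: cinner_add_left cinner_add_right)

lemma has_adjoint_scaleC: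
  "has_adjoint T T' \<Longrightarrow> has_adjoint (\<lambda>x. scaleC c (T x)) (\<lambda>y. scaleC (cnj c) (T' y))"
  unfolding has_adjoint_def by (simp add: cinner_scaleC_left cinner_scaleC_right)

lemma has_adjoint_comp: "has_adjoint S S' \<Longrightarrow> has_adjoint T T' \<Longrightarrow> has_adjoint (S \<circ> T) (T' \<circ> S')"
  unfolding has_adjoint_def by simp

lemma has_adjoint_ident: "has_adjoint (\<lambda>x. x) (\<lambda>x. x)"
  unfolding has_adjoint_def by simp

lemma has_adjoint_0: "has_adjoint (\<lambda>x. 0) (\<lambda>x. 0)"
  unfolding has_adjoint_def by simp

lemma has_adjoint_sum:
  "(\<And>i. i \<in> I \<Longrightarrow> has_adjoint (T i) (S i)) \<Longrightarrow>
    has_adjoint (\<lambda>x. \<Sum>i\<in>I. T i x) (\<lambda>y. \<Sum>i\<in>I. S i y)"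
  unfolding has_adjoint_def by (simp add: cinner_sum_left cinner_sum_right)

lemma adj_eqI:
  assumes "has_adjoint T S"
  shows "adj T = S"
proof -
  have "has_adjoint T (adj T)"
    using someI_ex[of "\<lambda>S. \<forall>x y. cinner (T x) y = cinner x (S y)"] assms
    unfolding has_adjoint_def adj_def by blast
  then have "cinner (adj T y - S y) (adj T y - S y) = 0" for y
    using assms by (simp add: has_adjoint_def cinner_diff_right cinner_commute[of "adj T y - S y"])
  then show ?thesis by auto
qed

text \<open>\<open>cinner\<close> is determined by its real part \<open>inner\<close> (\<open>cinner_eq_Complex\<close>), so the real
  Riesz theorem applied to \<open>\<lambda>x. inner (T x) y\<close> yields the adjoint.\<close>

lemma has_adjoint_adj:
  assumes T: "bounded_op T"
  shows "has_adjoint T (adj T)"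
proof -
  have "\<exists>w. \<forall>x. inner (T x) y = inner x w" for y
    using riesz_representation_real[OF bounded_linear_compose[OF bounded_linear_inner_left
          bounded_op_bounded_linear[OF T]]] by metis
  then obtain W where W: "\<And>x y. inner (T x) y = inner x (W y)" by metis
  have "cinner (T x) y = cinner x (W y)" for x y
    using W[of "scaleC \<i> x" y] by (simp add: cinner_eq_Complex W bounded_op_scaleC[OF T])
  then show ?thesis using adj_eqI unfolding has_adjoint_def by metis
qed

lemma selfadjoint_iff_has_adjoint: "bounded_op T \<Longrightarrow> adj T = T \<longleftrightarrow> has_adjoint T T"
  using adj_eqI has_adjoint_adj by metis

lemma adj_plus_i:
  assumes "bounded_op a" "bounded_op b" "adj a = a" "adj b = b"
  shows "adj (\<lambda>z. a z + scaleC \<i> (b z)) = (\<lambda>z. a z - scaleC \<i> (b z))"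
proof -
  have "has_adjoint a a" "has_adjoint b b" using assms selfadjoint_iff_has_adjoint by blast+
  then have "has_adjoint (\<lambda>z. a z + scaleC \<i> (b z)) (\<lambda>z. a z + scaleC (cnj \<i>) (b z))"
    by (intro has_adjoint_plus has_adjoint_scaleC)
  from adj_eqI[OF this] show ?thesis by simp
qed

definition invertible_op :: "('a::complex_hilbert \<Rightarrow> 'a) \<Rightarrow> bool" where
  "invertible_op U \<longleftrightarrow> (\<exists>S. bounded_op S \<and> S \<circ> U = id \<and> U \<circ> S = id)"

lemma op_spectrum_iff: "l \<in> op_spectrum T \<longleftrightarrow> \<not> invertible_op (\<lambda>x. T x - scaleC l x)"
  unfolding op_spectrum_def invertible_op_def BH_def by auto

lemma invertible_op_comp:
  assumes "invertible_op U" "invertible_op V"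
  shows "invertible_op (U \<circ> V)"
proof -
  obtain S R where "bounded_op S" "S \<circ> U = id" "U \<circ> S = id" "bounded_op R" "R \<circ> V = id" "V \<circ> R = id"
    using assms unfolding invertible_op_def by blast
  then have "bounded_op (R \<circ> S)" "(R \<circ> S) \<circ> (U \<circ> V) = id" "(U \<circ> V) \<circ> (R \<circ> S) = id"
    by (simp_all add: bounded_op_comp comp_assoc) (simp_all flip: comp_assoc)
  then show ?thesis unfolding invertible_op_def by blast
qed

lemma invertible_op_ident: "invertible_op (\<lambda>x. x)"
  unfolding invertible_op_def using bounded_op_ident by (auto simp: id_def fun_eq_iff)

lemma invertible_op_scaleC:
  assumes "invertible_op U" "bounded_op U" "c \<noteq> 0"
  shows "invertible_op (\<lambda>x. scaleC c (U x))"
proof -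
  obtain S where S: "bounded_op S" "S \<circ> U = id" "U \<circ> S = id"
    using assms(1) unfolding invertible_op_def by blast
  define S' where "S' = S \<circ> (\<lambda>x. scaleC (inverse c) x)"
  have "bounded_op S'" unfolding S'_def by (intro bounded_op_comp S bounded_op_scaleC_op bounded_op_ident)
  moreover have "S' \<circ> (\<lambda>x. scaleC c (U x)) = id" "(\<lambda>x. scaleC c (U x)) \<circ> S' = id"
    using S(2,3) assms(3) unfolding S'_def
    by (simp_all add: fun_eq_iff bounded_op_scaleC[OF assms(2)] bounded_op_scaleC[OF S(1)] comp_def)
  ultimately show ?thesis unfolding invertible_op_def by blast
qed

context
  fixes A :: "('a::complex_hilbert \<Rightarrow> 'a) set"
  assumes A: "star_subalgebra A"
begin

lemma star_subalgebra_bounded: "T \<in> A \<Longrightarrow> bounded_op T"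
  using A unfolding star_subalgebra_def BH_def by blast

lemma star_subalgebra_0: "(\<lambda>x. 0) \<in> A"
  using A unfolding star_subalgebra_def by blast

lemma star_subalgebra_plus: "S \<in> A \<Longrightarrow> T \<in> A \<Longrightarrow> (\<lambda>x. S x + T x) \<in> A"
  using A unfolding star_subalgebra_def by blast

lemma star_subalgebra_scaleC: "T \<in> A \<Longrightarrow> (\<lambda>x. scaleC c (T x)) \<in> A"
  using A unfolding star_subalgebra_def by blast

lemma star_subalgebra_comp: "S \<in> A \<Longrightarrow> T \<in> A \<Longrightarrow> S \<circ> T \<in> A"
  using A unfolding star_subalgebra_def by blast

lemma star_subalgebra_adj: "T \<in> A \<Longrightarrow> adj T \<in> A"
  using A unfolding star_subalgebra_def by blast

lemma star_subalgebra_diff: "S \<in> A \<Longrightarrow> T \<in> A \<Longrightarrow> (\<lambda>x. S x - T x) \<in> A"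
  using star_subalgebra_plus[of S "\<lambda>x. scaleC (-1) (T x)"] star_subalgebra_scaleC[of T "-1"] by simp

lemma star_subalgebra_sum:
  "finite I \<Longrightarrow> (\<And>i. i \<in> I \<Longrightarrow> f i \<in> A) \<Longrightarrow> (\<lambda>x. \<Sum>i\<in>I. scaleC (c i) (f i x)) \<in> A"
  by (induction I rule: finite_induct)
    (simp_all add: star_subalgebra_0 star_subalgebra_plus star_subalgebra_scaleC)

end

lemma star_subalgebra_cartesian_decomposition:
  assumes A: "star_subalgebra A" and "x \<in> A"
  obtains a b where "a \<in> A" "b \<in> A" "adj a = a" "adj b = b" "x = (\<lambda>z. a z + scaleC \<i> (b z))"
proof
  have adj: "has_adjoint x (adj x)" "has_adjoint (adj x) x"
    using has_adjoint_adj[OF star_subalgebra_bounded[OF A \<open>x \<in> A\<close>]] has_adjoint_sym by blast+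
  have "adj x \<in> A" using star_subalgebra_adj[OF A \<open>x \<in> A\<close>] .
  let ?a = "\<lambda>z. scaleC (1/2) (x z) + scaleC (1/2) (adj x z)"
  let ?b = "\<lambda>z. scaleC (-\<i>/2) (x z) + scaleC (\<i>/2) (adj x z)"
  show "?a \<in> A" "?b \<in> A"
    by (intro star_subalgebra_plus[OF A] star_subalgebra_scaleC[OF A] \<open>x \<in> A\<close> \<open>adj x \<in> A\<close>)+
  have "has_adjoint ?a (\<lambda>y. scaleC (cnj (1/2)) (adj x y) + scaleC (cnj (1/2)) (x y))"
    "has_adjoint ?b (\<lambda>y. scaleC (cnj (-\<i>/2)) (adj x y) + scaleC (cnj (\<i>/2)) (x y))"
    by (intro has_adjoint_plus has_adjoint_scaleC adj)+
  from this[THEN adj_eqI] show "adj ?a = ?a" "adj ?b = ?b"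
    by (simp_all add: fun_eq_iff add.commute)
  show "x = (\<lambda>z. ?a z + scaleC \<i> (?b z))"
  proof
    fix z
    have "?a z + scaleC \<i> (?b z) =
        scaleC (1/2 + \<i> * (-\<i>/2)) (x z) + scaleC (1/2 + \<i> * (\<i>/2)) (adj x z)"
      by (simp only: complex_vector.scale_right_distrib complex_vector.scale_left_distrib
          complex_vector.scale_scale add_ac)
    then show "x z = ?a z + scaleC \<i> (?b z)" by simp
  qed
qed

section \<open>Polynomials in an operator\<close>

definition op_poly :: "complex poly \<Rightarrow> ('a::complex_hilbert \<Rightarrow> 'a) \<Rightarrow> 'a \<Rightarrow> 'a" where
  "op_poly p T x = (\<Sum>i<Suc (degree p). scaleC (coeff p i) ((T ^^ i) x))"

lemma op_poly_0 [simp]: "op_poly 0 T x = 0"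
  unfolding op_poly_def by simp

lemma op_poly_pCons:
  assumes T: "bounded_op T"
  shows "op_poly (pCons a p) T x = scaleC a x + T (op_poly p T x)"
proof -
  have "op_poly (pCons a p) T x = (\<Sum>i<Suc (Suc (degree p)). scaleC (coeff (pCons a p) i) ((T ^^ i) x))"
    unfolding op_poly_def
    by (rule sum.mono_neutral_left) (auto simp: degree_pCons_le le_imp_less_Suc coeff_eq_0)
  also have "\<dots> = scaleC a x + (\<Sum>i<Suc (degree p). T (scaleC (coeff p i) ((T ^^ i) x)))"
    by (subst sum.lessThan_Suc_shift) (simp add: bounded_op_scaleC[OF T])
  also have "\<dots> = scaleC a x + T (op_poly p T x)"
    unfolding op_poly_def by (simp only: bounded_op_sum[OF T])
  finally show ?thesis .
qed

context
  fixes T :: "'a::complex_hilbert \<Rightarrow> 'a"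
  assumes T: "bounded_op T"
begin

lemma op_poly_const: "op_poly [:c:] T x = scaleC c x"
  by (simp add: op_poly_pCons[OF T] bounded_op_zero[OF T])

lemma op_poly_1: "op_poly 1 T x = x"
  using op_poly_const[of 1] by (simp add: one_pCons)

lemma op_poly_linear: "op_poly [:-r, 1:] T x = T x - scaleC r x"
  by (simp add: op_poly_pCons[OF T] op_poly_const bounded_op_zero[OF T])

lemma op_poly_add: "op_poly (p + q) T x = op_poly p T x + op_poly q T x"
proof (induction p arbitrary: q x rule: pCons_induct)
  case (pCons a p)
  show ?case
  proof (cases q rule: pCons_cases)
    case (pCons b q')
    show ?thesis unfolding pCons add_pCons
      by (simp add: op_poly_pCons[OF T] pCons.IH bounded_op_add[OF T]
          complex_vector.scale_left_distrib algebra_simps)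
  qed
qed simp

lemma op_poly_smult: "op_poly (smult c p) T x = scaleC c (op_poly p T x)"
  by (induction p arbitrary: x rule: pCons_induct)
    (simp_all add: op_poly_pCons[OF T] bounded_op_scaleC[OF T] complex_vector.scale_right_distrib)

lemma op_poly_diff: "op_poly (p - q) T x = op_poly p T x - op_poly q T x"
  using op_poly_add[of p "- q" x] op_poly_smult[of "-1" q x] by simp

lemma op_poly_sum: "op_poly (\<Sum>i\<in>I. f i) T x = (\<Sum>i\<in>I. op_poly (f i) T x)"
  by (induction I rule: infinite_finite_induct) (auto simp: op_poly_add)

lemma op_poly_mult: "op_poly (p * q) T x = op_poly p T (op_poly q T x)"
  by (induction p arbitrary: x rule: pCons_induct)
    (simp_all add: mult_pCons_left op_poly_add op_poly_smult op_poly_pCons[OF T])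

lemma op_poly_X: "op_poly [:0, 1:] T x = T x"
  by (simp add: op_poly_pCons[OF T] op_poly_const bounded_op_zero[OF T])

lemma op_poly_commute: "T (op_poly p T x) = op_poly p T (T x)"
proof -
  have "op_poly ([:0, 1:] * p) T x = op_poly (p * [:0, 1:]) T x" by (simp only: mult.commute)
  then show ?thesis by (simp only: op_poly_mult op_poly_X)
qed

lemma bounded_op_op_poly: "bounded_op (op_poly p T)"
proof (induction p rule: pCons_induct)
  case 0
  then show ?case using bounded_op_0 by (simp add: fun_eq_iff)
next
  case (pCons a p)
  have "bounded_op (\<lambda>x. scaleC a x + T (op_poly p T x))"
    using bounded_op_plus[OF bounded_op_scaleC_op[OF bounded_op_ident]
        bounded_op_comp[OF T pCons.IH]] by (simp add: comp_def)
  then show ?case by (simp add: op_poly_pCons[OF T])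
qed

lemma op_poly_eigenvector:
  assumes "T v = scaleC l v"
  shows "op_poly p T v = scaleC (poly p l) v"
proof (induction p rule: pCons_induct)
  case (pCons a p)
  then show ?case
    by (simp add: op_poly_pCons[OF T] bounded_op_scaleC[OF T] assms algebra_simps)
qed simp

lemma has_adjoint_op_poly:
  assumes "has_adjoint T T"
  shows "has_adjoint (op_poly p T) (op_poly (map_poly cnj p) T)"
proof (induction p rule: pCons_induct)
  case 0
  then show ?case using has_adjoint_0 by (simp add: fun_eq_iff)
next
  case (pCons a p)
  have "has_adjoint (T \<circ> op_poly p T) (op_poly (map_poly cnj p) T \<circ> T)"
    by (rule has_adjoint_comp[OF assms pCons.IH])
  also have "op_poly (map_poly cnj p) T \<circ> T = T \<circ> op_poly (map_poly cnj p) T"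
    by (simp add: fun_eq_iff op_poly_commute)
  finally have "has_adjoint (\<lambda>x. scaleC a x + T (op_poly p T x))
      (\<lambda>y. scaleC (cnj a) y + T (op_poly (map_poly cnj p) T y))"
    using has_adjoint_plus[OF has_adjoint_scaleC[OF has_adjoint_ident]] by (simp add: comp_def)
  then show ?case by (simp add: op_poly_pCons[OF T] map_poly_pCons fun_eq_iff)
qed

lemma comp_op_poly_in_star_subalgebra:
  assumes A: "star_subalgebra A" and "T \<in> A"
  shows "(\<lambda>x. T (op_poly p T x)) \<in> A"
proof (induction p rule: pCons_induct)
  case 0
  then show ?case using star_subalgebra_0[OF A] by (simp add: bounded_op_zero[OF T])
next
  case (pCons a p)
  have "(\<lambda>x. scaleC a (T x) + (T \<circ> (\<lambda>x. T (op_poly p T x))) x) \<in> A"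
    using A \<open>T \<in> A\<close> pCons.IH
    by (intro star_subalgebra_plus star_subalgebra_scaleC star_subalgebra_comp)
  then show ?case by (simp add: op_poly_pCons[OF T] bounded_op_add[OF T] bounded_op_scaleC[OF T])
qed

lemma invertible_op_poly_linear_factors:
  fixes n :: nat
  assumes "\<And>i. i < n \<Longrightarrow> invertible_op (\<lambda>x. T x - scaleC (r i) x)"
  shows "invertible_op (op_poly (\<Prod>i<n. [:-r i, 1:]) T)"
  using assms
proof (induction n)
  case 0
  then show ?case using invertible_op_ident by (simp add: op_poly_1)
next
  case (Suc n)
  have "op_poly [:-r n, 1:] T = (\<lambda>x. T x - scaleC (r n) x)"
    by (simp add: fun_eq_iff op_poly_linear)
  then have "invertible_op (op_poly (\<Prod>i<n. [:-r i, 1:]) T \<circ> op_poly [:-r n, 1:] T)"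
    using Suc by (intro invertible_op_comp) simp_all
  moreover have "op_poly (\<Prod>i<n. [:-r i, 1:]) T \<circ> op_poly [:-r n, 1:] T =
      op_poly (\<Prod>i<Suc n. [:-r i, 1:]) T"
    by (simp only: fun_eq_iff comp_apply prod.lessThan_Suc op_poly_mult simp_thms)
  ultimately show ?case by simp
qed

text \<open>The inclusion \<open>op_spectrum (p(T)) \<subseteq> poly p ` op_spectrum T\<close> of the spectral mapping theorem.\<close>

lemma invertible_op_poly_minus:
  assumes "op_spectrum T \<noteq> {}" and "\<forall>z\<in>op_spectrum T. poly p z \<noteq> \<mu>"
  shows "invertible_op (\<lambda>x. op_poly p T x - scaleC \<mu> x)"
proof -
  define q where "q = p - [:\<mu>:]"
  have q: "op_poly q T = (\<lambda>x. op_poly p T x - scaleC \<mu> x)"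
    unfolding q_def by (simp add: fun_eq_iff op_poly_diff op_poly_const)
  have "q \<noteq> 0" using assms unfolding q_def by auto
  obtain root where root: "smult (lead_coeff q) (\<Prod>i<degree q. [:-root i, 1:]) = q"
    using complex_poly_decompose' by blast
  have root_mu: "poly p (root i) = \<mu>" if "i < degree q" for i
  proof -
    have "poly q (root i) = lead_coeff q * (\<Prod>j<degree q. poly [:-root j, 1:] (root i))"
      by (subst root[symmetric]) (simp add: poly_prod)
    also have "\<dots> = 0" using that by (intro mult_eq_0_iff[THEN iffD2] disjI2 prod_zero) auto
    finally show ?thesis unfolding q_def by simp
  qed
  then have "invertible_op (\<lambda>x. T x - scaleC (root i) x)" if "i < degree q" for i
    using root_mu[OF that] assms(2) op_spectrum_iff by metis
  then have "invertible_op (op_poly (\<Prod>i<degree q. [:-root i, 1:]) T)"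
    by (rule invertible_op_poly_linear_factors)
  then have "invertible_op (\<lambda>x. scaleC (lead_coeff q) (op_poly (\<Prod>i<degree q. [:-root i, 1:]) T x))"
    using \<open>q \<noteq> 0\<close> by (intro invertible_op_scaleC bounded_op_op_poly) auto
  also have "(\<lambda>x. scaleC (lead_coeff q) (op_poly (\<Prod>i<degree q. [:-root i, 1:]) T x)) = op_poly q T"
    using op_poly_smult[of "lead_coeff q" "\<Prod>i<degree q. [:-root i, 1:]"] unfolding root
    by (simp add: fun_eq_iff)
  finally show ?thesis by (simp only: q)
qed

end

lemma positive_op_cauchy_schwarz:
  fixes P :: "'a::complex_hilbert \<Rightarrow> 'a"
  assumes P: "bounded_op P" and sym: "\<And>x y. inner (P x) y = inner x (P y)"
    and pos: "\<And>x. inner (P x) x \<ge> 0"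
  shows "(inner (P x) y)^2 \<le> inner (P x) x * inner (P y) y"
proof (rule quadratic_nonneg_discriminant[OF pos])
  fix t :: real
  have "inner (P y) x = inner (P x) y" using sym[of y x] by (simp add: inner_commute)
  then have "inner (P (x + t *\<^sub>R y)) (x + t *\<^sub>R y) =
      inner (P x) x + 2 * t * inner (P x) y + t^2 * inner (P y) y"
    by (simp add: bounded_op_add[OF P] bounded_op_scaleR[OF P] inner_add_left inner_add_right
        power2_eq_square algebra_simps)
  then show "0 \<le> inner (P x) x + 2 * t * inner (P x) y + t^2 * inner (P y) y"
    using pos[of "x + t *\<^sub>R y"] by simp
qed

lemma invertible_positive_op_coercive:
  fixes P :: "'a::complex_hilbert \<Rightarrow> 'a"
  assumes P: "bounded_op P" and sym: "\<And>x y. inner (P x) y = inner x (P y)"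
    and pos: "\<And>x. inner (P x) x \<ge> 0" and inv: "invertible_op P"
  obtains C where "C > 0" "\<And>x. (norm x)^2 \<le> C * inner (P x) x"
proof -
  obtain R where R: "bounded_op R" "R \<circ> P = id" using inv unfolding invertible_op_def by blast
  obtain KR where KR: "KR > 0" "\<And>y. norm (R y) \<le> KR * norm y" using bounded_op_bound[OF R(1)] by blast
  obtain KP where KP: "KP > 0" "\<And>y. norm (P y) \<le> KP * norm y" using bounded_op_bound[OF P] by blast
  have "(norm x)^2 \<le> (KR^2 * KP) * inner (P x) x" for x
  proof -
    define y where "y = P x"
    have "norm x \<le> KR * norm y"
      using KR(2)[of y] R(2) unfolding y_def by (metis comp_apply id_apply)
    then have "(norm x)^2 \<le> KR^2 * (norm y)^2"
      by (metis norm_ge_zero power_mono power_mult_distrib)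
    moreover have "(norm y)^2 \<le> KP * inner (P x) x"
    proof (cases "y = 0")
      case False
      have "((norm y)^2)^2 \<le> inner (P x) x * inner (P y) y"
        using positive_op_cauchy_schwarz[OF P sym pos, of x y] unfolding y_def
        by (simp add: power2_norm_eq_inner)
      also have "\<dots> \<le> inner (P x) x * (KP * (norm y)^2)"
      proof (rule mult_left_mono[OF _ pos])
        have "inner (P y) y \<le> norm (P y) * norm y" by (rule norm_cauchy_schwarz)
        also have "\<dots> \<le> KP * norm y * norm y" using KP(2)[of y] by (simp add: mult_right_mono)
        finally show "inner (P y) y \<le> KP * (norm y)^2" by (simp add: power2_eq_square mult.assoc)
      qed
      finally show ?thesis using False by (simp add: power2_eq_square algebra_simps)
    qed (use pos[of x] KP(1) in simp)
    ultimately show ?thesis using KR(1) by (smt (verit) mult.assoc mult_left_mono zero_le_power2)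
  qed
  then show ?thesis using that[of "KR^2 * KP"] KR KP by simp
qed

lemma numerical_range_bdd_above:
  fixes S :: "'a::complex_hilbert \<Rightarrow> 'a"
  assumes "bounded_op S"
  shows "bdd_above {inner (S x) x | x. norm x = 1}"
proof -
  obtain K where "\<And>y. norm (S y) \<le> K * norm y" using assms unfolding bounded_op_def by blast
  then have "inner (S x) x \<le> K" if "norm x = 1" for x
    using norm_cauchy_schwarz[of "S x" x] that by (metis mult.right_neutral order_trans)
  then show ?thesis by (intro bdd_aboveI[of _ K]) blast
qed

lemma inner_le_numerical_range_Sup:
  fixes S :: "'a::complex_hilbert \<Rightarrow> 'a"
  assumes S: "bounded_op S"
  shows "inner (S x) x \<le> Sup {inner (S x) x | x. norm x = 1} * (norm x)^2"
proof (cases "x = 0")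
  case False
  define u where "u = (1 / norm x) *\<^sub>R x"
  have "norm u = 1" unfolding u_def using False by simp
  then have "inner (S u) u \<le> Sup {inner (S x) x | x. norm x = 1}"
    using numerical_range_bdd_above[OF S] by (auto intro: cSup_upper)
  moreover have "inner (S u) u = inner (S x) x / (norm x)^2"
    unfolding u_def by (simp add: bounded_op_scaleR[OF S] power2_eq_square)
  ultimately show ?thesis using False by (simp add: divide_le_eq)
qed (simp add: bounded_op_zero[OF S])

text \<open>If \<open>M\<close> were not in the spectrum, \<open>M - S\<close> would be an invertible positive operator, hence
  coercive, and \<open>M\<close> could be lowered.\<close>

lemma selfadjoint_numerical_range_Sup_in_spectrum:
  fixes S :: "'a::complex_hilbert \<Rightarrow> 'a" and x0 :: 'a
  assumes S: "bounded_op S" and sa: "has_adjoint S S" and "x0 \<noteq> 0"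
  shows "complex_of_real (Sup {inner (S x) x | x. norm x = 1}) \<in> op_spectrum S"
proof (rule ccontr)
  define M where "M = Sup {inner (S x) x | x. norm x = 1}"
  define P where "P = (\<lambda>x. scaleC (-1) (S x - scaleC (complex_of_real M) x))"
  have P_eq: "P x = M *\<^sub>R x - S x" for x
    unfolding P_def by (simp add: scaleC_of_real)
  have "bounded_op P"
    unfolding P_def by (intro bounded_op_scaleC_op bounded_op_minus_op S bounded_op_ident)
  moreover have "inner (P x) y = inner x (P y)" for x y
    by (simp add: P_eq inner_diff_left inner_diff_right has_adjoint_inner[OF sa])
  moreover have "inner (P x) x \<ge> 0" for x
    using inner_le_numerical_range_Sup[OF S, of x]
    by (simp add: P_eq inner_diff_left M_def power2_norm_eq_inner)
  moreover assume "complex_of_real M \<notin> op_spectrum S"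
  then have "invertible_op P"
    unfolding P_def op_spectrum_iff M_def
    by (intro invertible_op_scaleC bounded_op_minus_op S bounded_op_scaleC_op bounded_op_ident) auto
  ultimately obtain C where C: "C > 0" "\<And>x. (norm x)^2 \<le> C * inner (P x) x"
    using invertible_positive_op_coercive by blast
  have "Sup {inner (S x) x | x. norm x = 1} \<le> M - 1 / C"
  proof (rule cSup_least)
    show "{inner (S x) x | x. norm x = 1} \<noteq> {}"
      using \<open>x0 \<noteq> 0\<close> by (auto intro!: exI[of _ "(1 / norm x0) *\<^sub>R x0"])
    fix q assume "q \<in> {inner (S x) x | x. norm x = 1}"
    then obtain x where "norm x = 1" "q = inner (S x) x" by blast
    moreover from \<open>norm x = 1\<close> have "inner x x = 1" by (metis power2_norm_eq_inner power_one)
    ultimately show "q \<le> M - 1 / C"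
      using C(2)[of x] C(1) by (simp add: P_eq inner_diff_left field_simps)
  qed
  then show False using C(1) unfolding M_def by simp
qed

lemma selfadjoint_op_spectrum_nonempty:
  fixes S :: "'a::complex_hilbert \<Rightarrow> 'a" and x0 :: 'a
  assumes "bounded_op S" "has_adjoint S S" "x0 \<noteq> 0"
  shows "op_spectrum S \<noteq> {}"
  using selfadjoint_numerical_range_Sup_in_spectrum[OF assms] by blast

text \<open>The supremum of the numerical range of \<open>S' \<circ> S\<close> lies in its spectrum, so it is \<open>0\<close>
  and \<open>(norm (S x))\<^sup>2 = inner (S' (S x)) x \<le> 0\<close>.\<close>

lemma adjoint_comp_spectrum_0_imp_0:
  fixes S :: "'a::complex_hilbert \<Rightarrow> 'a"
  assumes S: "bounded_op S" and S': "bounded_op S'" and adj: "has_adjoint S S'"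
    and spec: "op_spectrum (S' \<circ> S) \<subseteq> {0}"
  shows "S = (\<lambda>x. 0)"
proof (cases "\<exists>x0::'a. x0 \<noteq> 0")
  case True
  then obtain x0 :: 'a where "x0 \<noteq> 0" by blast
  have "has_adjoint (S' \<circ> S) (S' \<circ> S)"
    using has_adjoint_comp[OF has_adjoint_sym[OF adj] adj] .
  from selfadjoint_numerical_range_Sup_in_spectrum[OF bounded_op_comp[OF S' S] this \<open>x0 \<noteq> 0\<close>]
  have "Sup {inner ((S' \<circ> S) x) x | x. norm x = 1} = 0" using spec by auto
  moreover have "inner (S x) (S x) = inner ((S' \<circ> S) x) x" for x
    using has_adjoint_inner[OF has_adjoint_sym[OF adj], of "S x" x] by simp
  ultimately have "inner (S x) (S x) \<le> 0" for x
    using inner_le_numerical_range_Sup[OF bounded_op_comp[OF S' S], of x] by simp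
  then show ?thesis by (intro ext) (metis inner_eq_zero_iff inner_ge_zero order_antisym)
qed auto

section \<open>Spectral decomposition of a self-adjoint operator with finite spectrum\<close>

definition vanishing_poly :: "complex set \<Rightarrow> complex poly" where
  "vanishing_poly Z = (\<Prod>z\<in>Z. [:-z, 1:])"

definition lagrange_basis :: "complex set \<Rightarrow> complex \<Rightarrow> complex poly" where
  "lagrange_basis Z z = smult (inverse (\<Prod>w\<in>Z-{z}. z - w)) (\<Prod>w\<in>Z-{z}. [:-w, 1:])"

lemma poly_vanishing_poly_eq_0: "finite Z \<Longrightarrow> z \<in> Z \<Longrightarrow> poly (vanishing_poly Z) z = 0"
  unfolding vanishing_poly_def by (simp add: poly_prod prod_zero_iff)

lemma poly_lagrange_basis:
  assumes "finite Z" "z \<in> Z" "w \<in> Z"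
  shows "poly (lagrange_basis Z z) w = (if w = z then 1 else 0)"
proof (cases "w = z")
  case True
  have "(\<Prod>v\<in>Z-{z}. z - v) \<noteq> 0" using assms by (simp add: prod_zero_iff)
  then show ?thesis using True unfolding lagrange_basis_def by (simp add: poly_prod)
next
  case False
  then have "(\<Prod>v\<in>Z-{z}. poly [:-v, 1:] w) = 0" using assms by (intro prod_zero) auto
  then show ?thesis using False unfolding lagrange_basis_def by (simp add: poly_prod)
qed

lemma degree_lagrange_basis:
  assumes "finite Z" "z \<in> Z"
  shows "degree (lagrange_basis Z z) \<le> card Z - 1"
proof -
  have "degree (lagrange_basis Z z) \<le> degree (\<Prod>w\<in>Z-{z}. [:-w, 1:])"
    unfolding lagrange_basis_def by (rule degree_smult_le)
  also have "\<dots> \<le> (\<Sum>w\<in>Z-{z}. degree [:-w, 1:])"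
    using degree_prod_sum_le[of "Z-{z}" "\<lambda>w. [:-w, 1:]"] assms by (simp add: comp_def)
  also have "\<dots> = card Z - 1" using assms by simp
  finally show ?thesis .
qed

text \<open>The polynomial \<open>(\<Sum>z\<in>Z. lagrange_basis Z z) - 1\<close> has degree below \<open>card Z\<close> but
  vanishes on \<open>Z\<close>.\<close>

lemma sum_lagrange_basis:
  assumes fin: "finite Z" and "Z \<noteq> {}"
  shows "(\<Sum>z\<in>Z. lagrange_basis Z z) = 1"
proof (rule ccontr)
  define L where "L = (\<Sum>z\<in>Z. lagrange_basis Z z) - 1"
  assume "(\<Sum>z\<in>Z. lagrange_basis Z z) \<noteq> 1"
  then have "L \<noteq> 0" unfolding L_def by simp
  have "Z \<subseteq> {w. poly L w = 0}"
    using fin by (auto simp: L_def poly_sum poly_lagrange_basis if_distrib cong: sum.cong)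
  then have "card Z \<le> degree L"
    using card_mono[OF poly_roots_finite[OF \<open>L \<noteq> 0\<close>]] card_poly_roots_bound[OF \<open>L \<noteq> 0\<close>]
    by (meson order_trans)
  moreover have "degree L \<le> card Z - 1"
    unfolding L_def by (intro degree_diff_le degree_sum_le fin degree_lagrange_basis) auto
  ultimately show False using assms card_gt_0_iff[of Z] by linarith
qed

lemma linear_mult_lagrange_basis:
  assumes "finite Z" "z \<in> Z"
  shows "[:-z, 1:] * lagrange_basis Z z = smult (inverse (\<Prod>w\<in>Z-{z}. z - w)) (vanishing_poly Z)"
  unfolding lagrange_basis_def vanishing_poly_def using assms
  by (simp add: prod.remove[of Z z] mult_smult_right)

text \<open>With \<open>m = vanishing_poly (op_spectrum T)\<close>, the positive operator
  \<open>m(T)\<^sup>* m(T) = (cnj m \<cdot> m)(T)\<close> has spectrum \<open>{0}\<close> by spectral mapping.\<close>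

lemma op_poly_vanishing_poly_op_spectrum:
  fixes T :: "'a::complex_hilbert \<Rightarrow> 'a"
  assumes T: "bounded_op T" and sa: "has_adjoint T T" and fin: "finite (op_spectrum T)"
  shows "op_poly (vanishing_poly (op_spectrum T)) T = (\<lambda>x. 0)"
proof (cases "\<exists>x0::'a. x0 \<noteq> 0")
  case True
  then have ne: "op_spectrum T \<noteq> {}" using selfadjoint_op_spectrum_nonempty[OF T sa] by blast
  define m where "m = vanishing_poly (op_spectrum T)"
  have "op_spectrum (op_poly (map_poly cnj m) T \<circ> op_poly m T) \<subseteq> {0}"
  proof
    fix \<mu> assume \<mu>: "\<mu> \<in> op_spectrum (op_poly (map_poly cnj m) T \<circ> op_poly m T)"
    have "poly (map_poly cnj m * m) z = 0" if "z \<in> op_spectrum T" for z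
      using poly_vanishing_poly_eq_0[OF fin that] unfolding m_def by simp
    show "\<mu> \<in> {0}"
    proof (rule ccontr)
      assume "\<mu> \<notin> {0}"
      with \<open>\<And>z. z \<in> op_spectrum T \<Longrightarrow> poly (map_poly cnj m * m) z = 0\<close>
      have "invertible_op (\<lambda>x. op_poly (map_poly cnj m * m) T x - scaleC \<mu> x)"
        by (intro invertible_op_poly_minus[OF T ne]) auto
      with \<mu> show False by (simp add: op_spectrum_iff op_poly_mult[OF T] comp_def)
    qed
  qed
  then show ?thesis unfolding m_def
    using adjoint_comp_spectrum_0_imp_0[OF bounded_op_op_poly[OF T] bounded_op_op_poly[OF T]
        has_adjoint_op_poly[OF T sa]] by blast
qed auto

definition spectral_projection :: "('a::complex_hilbert \<Rightarrow> 'a) \<Rightarrow> complex \<Rightarrow> 'a \<Rightarrow> 'a" where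
  "spectral_projection T z = op_poly (lagrange_basis (op_spectrum T) z) T"

context
  fixes T :: "'a::complex_hilbert \<Rightarrow> 'a"
  assumes T: "bounded_op T" and sa: "has_adjoint T T" and fin: "finite (op_spectrum T)"
begin

lemma sum_spectral_projection: "(\<Sum>z\<in>op_spectrum T. spectral_projection T z x) = x"
proof (cases "\<exists>x0::'a. x0 \<noteq> 0")
  case True
  then have "op_spectrum T \<noteq> {}" using selfadjoint_op_spectrum_nonempty[OF T sa] by blast
  then show ?thesis unfolding spectral_projection_def
    by (simp add: op_poly_sum[OF T, symmetric] sum_lagrange_basis[OF fin] op_poly_1[OF T])
qed metis

lemma spectral_projection_eigenvector:
  assumes "z \<in> op_spectrum T"
  shows "T (spectral_projection T z x) = scaleC z (spectral_projection T z x)"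
proof -
  have "op_poly ([:-z, 1:] * lagrange_basis (op_spectrum T) z) T x = 0"
    unfolding linear_mult_lagrange_basis[OF fin assms] op_poly_smult[OF T]
      op_poly_vanishing_poly_op_spectrum[OF T sa fin] by simp
  then have "T (spectral_projection T z x) - scaleC z (spectral_projection T z x) = 0"
    by (simp only: spectral_projection_def op_poly_mult[OF T] op_poly_linear[OF T])
  then show ?thesis by simp
qed

lemma spectral_projection_comp:
  assumes "z \<in> op_spectrum T" "w \<in> op_spectrum T"
  shows "spectral_projection T z (spectral_projection T w x) =
    (if w = z then spectral_projection T w x else 0)"
  using op_poly_eigenvector[OF T spectral_projection_eigenvector[OF assms(2)]]
    poly_lagrange_basis[OF fin assms]
  unfolding spectral_projection_def by simp

lemma spectral_projection_nonreal:
  assumes "z \<in> op_spectrum T" "z \<notin> \<real>"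
  shows "spectral_projection T z x = 0"
proof -
  let ?v = "spectral_projection T z x"
  have "cnj z * cinner ?v ?v = z * cinner ?v ?v"
    using has_adjointD[OF sa, of ?v ?v] spectral_projection_eigenvector[OF assms(1)]
    by (simp add: cinner_scaleC_left cinner_scaleC_right)
  moreover have "cnj z \<noteq> z" using assms(2) Reals_cnj_iff by metis
  ultimately show ?thesis by simp
qed

lemma spectral_projection_orthogonal:
  assumes "z \<in> op_spectrum T" "w \<in> op_spectrum T" "z \<noteq> w"
  shows "cinner (spectral_projection T z x) (spectral_projection T w y) = 0"
proof (cases "z \<in> \<real>")
  case True
  let ?u = "spectral_projection T z x" and ?v = "spectral_projection T w y"
  have "cnj z * cinner ?u ?v = w * cinner ?u ?v"
    using has_adjointD[OF sa, of ?u ?v] spectral_projection_eigenvector[OF assms(1)]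
      spectral_projection_eigenvector[OF assms(2)]
    by (simp add: cinner_scaleC_left cinner_scaleC_right)
  then show ?thesis using True assms(3) by (simp add: Reals_cnj_iff)
qed (simp add: spectral_projection_nonreal[OF assms(1)])

lemma has_adjoint_spectral_projection:
  assumes "z \<in> op_spectrum T"
  shows "has_adjoint (spectral_projection T z) (spectral_projection T z)"
  unfolding has_adjoint_def
proof (intro allI)
  fix x y
  let ?E = "spectral_projection T"
  have *: "cinner (?E z x) (?E w y) = (if w = z then cinner (?E z x) (?E z y) else 0)"
    "cinner (?E w x) (?E z y) = (if w = z then cinner (?E z x) (?E z y) else 0)"
    if "w \<in> op_spectrum T" for w
    using spectral_projection_orthogonal[OF assms that] spectral_projection_orthogonal[OF that assms]
    by auto
  have "cinner (?E z x) y = (\<Sum>w\<in>op_spectrum T. cinner (?E z x) (?E w y))"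
    by (simp add: sum_spectral_projection flip: cinner_sum_right)
  also have "\<dots> = (\<Sum>w\<in>op_spectrum T. cinner (?E w x) (?E z y))"
    using fin by (simp add: * cong: sum.cong)
  also have "\<dots> = cinner x (?E z y)"
    by (simp add: sum_spectral_projection flip: cinner_sum_left)
  finally show "cinner (?E z x) y = cinner x (?E z y)" .
qed

lemma spectral_decomposition:
  "T x = (\<Sum>z\<in>op_spectrum T. scaleC z (spectral_projection T z x))"
proof -
  have "T x = T (\<Sum>z\<in>op_spectrum T. spectral_projection T z x)"
    by (simp add: sum_spectral_projection)
  also have "\<dots> = (\<Sum>z\<in>op_spectrum T. scaleC z (spectral_projection T z x))"
    by (simp add: bounded_op_sum[OF T] spectral_projection_eigenvector)
  finally show ?thesis .
qed

end

text \<open>\<open>A\<close> need not be unital, so the spectral projection for the eigenvalue \<open>0\<close> may lie outside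
  \<open>A\<close>; for \<open>z \<noteq> 0\<close> it equals \<open>T (spectral_projection T z x) / z\<close>, which lies in \<open>A\<close>.\<close>

lemma star_subalgebra_selfadjoint_decomposition:
  fixes A :: "('a::complex_hilbert \<Rightarrow> 'a) set"
  assumes A: "star_subalgebra A" and "T \<in> A" "adj T = T" and fin: "finite (op_spectrum T)"
  obtains R e where "finite R" "\<And>z. z \<in> R \<Longrightarrow> z \<in> \<real>" "\<And>z. z \<in> R \<Longrightarrow> e z \<in> A"
    "\<And>z. z \<in> R \<Longrightarrow> is_projection (e z)"
    "\<And>z w. z \<in> R \<Longrightarrow> w \<in> R \<Longrightarrow> z \<noteq> w \<Longrightarrow> e z \<circ> e w = (\<lambda>x. 0)"
    "T = (\<lambda>x. \<Sum>z\<in>R. scaleC z (e z x))"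
proof
  have T: "bounded_op T" by (rule star_subalgebra_bounded[OF A \<open>T \<in> A\<close>])
  have sa: "has_adjoint T T" using \<open>adj T = T\<close> selfadjoint_iff_has_adjoint[OF T] by blast
  let ?R = "{z \<in> op_spectrum T. z \<in> \<real> \<and> z \<noteq> 0}"
  let ?E = "spectral_projection T"
  show "finite ?R" using fin by simp
  show "z \<in> \<real>" if "z \<in> ?R" for z using that by blast
  show "?E z \<in> A" if "z \<in> ?R" for z
  proof -
    have "(\<lambda>x. scaleC (inverse z) (T (?E z x))) \<in> A"
      unfolding spectral_projection_def
      by (intro star_subalgebra_scaleC[OF A] comp_op_poly_in_star_subalgebra[OF T A \<open>T \<in> A\<close>])
    then show ?thesis
      using that by (simp add: spectral_projection_eigenvector[OF T sa fin])
  qed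
  show "is_projection (?E z)" if "z \<in> ?R" for z
    using that spectral_projection_comp[OF T sa fin]
      adj_eqI[OF has_adjoint_spectral_projection[OF T sa fin]]
    unfolding is_projection_def by (auto simp: fun_eq_iff)
  show "?E z \<circ> ?E w = (\<lambda>x. 0)" if "z \<in> ?R" "w \<in> ?R" "z \<noteq> w" for z w
    using that spectral_projection_comp[OF T sa fin] by (auto simp: fun_eq_iff)
  show "T = (\<lambda>x. \<Sum>z\<in>?R. scaleC z (?E z x))"
  proof
    fix x
    have "T x = (\<Sum>z\<in>op_spectrum T. scaleC z (?E z x))"
      by (rule spectral_decomposition[OF T sa fin])
    also have "\<dots> = (\<Sum>z\<in>?R. scaleC z (?E z x))"
      using fin spectral_projection_nonreal[OF T sa fin] by (intro sum.mono_neutral_right) auto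
    finally show "T x = (\<Sum>z\<in>?R. scaleC z (?E z x))" .
  qed
qed

section \<open>Projection-preserving maps are Jordan homomorphisms\<close>

lemma idempotent_sum_imp_orthogonal:
  fixes P Q :: "'a::complex_hilbert \<Rightarrow> 'a"
  assumes P: "bounded_op P" and Q: "bounded_op Q" and "P \<circ> P = P" "Q \<circ> Q = Q"
    and PQ: "(\<lambda>x. P x + Q x) \<circ> (\<lambda>x. P x + Q x) = (\<lambda>x. P x + Q x)"
  shows "P \<circ> Q = (\<lambda>x. 0)"
proof
  fix x
  have PP: "P (P y) = P y" and QQ: "Q (Q y) = Q y" for y
    using \<open>P \<circ> P = P\<close> \<open>Q \<circ> Q = Q\<close> by (metis comp_apply)+
  have anti: "P (Q y) + Q (P y) = 0" for y
    using fun_cong[OF PQ, of y] by (simp add: bounded_op_add[OF P] bounded_op_add[OF Q] PP QQ algebra_simps)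
  \<comment> \<open>multiplying \<open>PQ + QP = 0\<close> by \<open>P\<close> on the left and on the right shows \<open>PQ = QP\<close>\<close>
  have "P (Q x) + P (Q (P x)) = 0"
    using arg_cong[OF anti[of x], of P] by (simp add: bounded_op_add[OF P] PP bounded_op_zero[OF P])
  moreover have "P (Q (P x)) + Q (P x) = 0" using anti[of "P x"] by (simp add: PP)
  ultimately have "P (Q x) = Q (P x)" by (metis add.commute add_left_cancel)
  then have "2 *\<^sub>R P (Q x) = 0" using anti[of x] by (simp add: scaleR_2)
  then show "(P \<circ> Q) x = 0" by simp
qed

lemma comp_sum_orthogonal_idempotents:
  fixes E :: "'i \<Rightarrow> 'a::complex_hilbert \<Rightarrow> 'a"
  assumes fin: "finite R" and bounded: "\<And>i. i \<in> R \<Longrightarrow> bounded_op (E i)"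
    and idem: "\<And>i. i \<in> R \<Longrightarrow> E i \<circ> E i = E i"
    and orth: "\<And>i j. i \<in> R \<Longrightarrow> j \<in> R \<Longrightarrow> i \<noteq> j \<Longrightarrow> E i \<circ> E j = (\<lambda>x. 0)"
  shows "(\<lambda>x. \<Sum>i\<in>R. scaleC (c i) (E i x)) \<circ> (\<lambda>x. \<Sum>i\<in>R. scaleC (c i) (E i x)) =
    (\<lambda>x. \<Sum>i\<in>R. scaleC (c i * c i) (E i x))"
proof
  fix x
  have EE: "E i (E j x) = (if j = i then E i x else 0)" if "i \<in> R" "j \<in> R" for i j
    using that idem orth by (metis comp_apply)
  have "E i (\<Sum>j\<in>R. scaleC (c j) (E j x)) = scaleC (c i) (E i x)" if "i \<in> R" for i
  proof -
    have "E i (\<Sum>j\<in>R. scaleC (c j) (E j x)) = (\<Sum>j\<in>R. if j = i then scaleC (c i) (E i x) else 0)"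
      using that by (auto simp: bounded_op_sum[OF bounded] bounded_op_scaleC[OF bounded] EE
          intro!: sum.cong)
    then show ?thesis using fin that by simp
  qed
  then show "((\<lambda>x. \<Sum>i\<in>R. scaleC (c i) (E i x)) \<circ> (\<lambda>x. \<Sum>i\<in>R. scaleC (c i) (E i x))) x =
      (\<Sum>i\<in>R. scaleC (c i * c i) (E i x))"
    by (simp cong: sum.cong)
qed

locale projection_preserving_map =
  fixes A :: "('h::complex_hilbert \<Rightarrow> 'h) set" and \<phi> :: "('h \<Rightarrow> 'h) \<Rightarrow> 'k::complex_hilbert \<Rightarrow> 'k"
  assumes R_star: "R_star_algebra A"
    and bounded_image: "\<And>T. T \<in> A \<Longrightarrow> bounded_op (\<phi> T)"
    and linear_phi: "linear_on_ops A \<phi>"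
    and preserves_projections: "\<And>p. p \<in> A \<Longrightarrow> is_projection p \<Longrightarrow> is_projection (\<phi> p)"
begin

lemma star_subalgebra: "star_subalgebra A"
  using R_star unfolding R_star_algebra_def by blast

lemma phi_plus: "S \<in> A \<Longrightarrow> T \<in> A \<Longrightarrow> \<phi> (\<lambda>x. S x + T x) = (\<lambda>y. \<phi> S y + \<phi> T y)"
  using linear_phi unfolding linear_on_ops_def by blast

lemma phi_scaleC: "T \<in> A \<Longrightarrow> \<phi> (\<lambda>x. scaleC c (T x)) = (\<lambda>y. scaleC c (\<phi> T y))"
  using linear_phi unfolding linear_on_ops_def by blast

lemma phi_diff: "S \<in> A \<Longrightarrow> T \<in> A \<Longrightarrow> \<phi> (\<lambda>x. S x - T x) = (\<lambda>y. \<phi> S y - \<phi> T y)"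
  using phi_plus[of S "\<lambda>x. scaleC (-1) (T x)"] phi_scaleC[of T "-1"]
    star_subalgebra_scaleC[OF star_subalgebra, of T "-1"] by simp

lemma phi_sum:
  "finite I \<Longrightarrow> (\<And>i. i \<in> I \<Longrightarrow> f i \<in> A) \<Longrightarrow>
    \<phi> (\<lambda>x. \<Sum>i\<in>I. scaleC (c i) (f i x)) = (\<lambda>y. \<Sum>i\<in>I. scaleC (c i) (\<phi> (f i) y))"
proof (induction I rule: finite_induct)
  case empty
  then show ?case using phi_scaleC[OF star_subalgebra_0[OF star_subalgebra], of 0] by simp
next
  case (insert i I)
  then show ?case
    by (simp add: phi_plus phi_scaleC star_subalgebra_scaleC[OF star_subalgebra]
        star_subalgebra_sum[OF star_subalgebra])
qed

lemma phi_orthogonal_projections: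
  assumes "p \<in> A" "q \<in> A" "is_projection p" "is_projection q"
    and "p \<circ> q = (\<lambda>x. 0)" "q \<circ> p = (\<lambda>x. 0)"
  shows "\<phi> p \<circ> \<phi> q = (\<lambda>x. 0)"
proof -
  have p: "bounded_op p" and q: "bounded_op q"
    using assms(1,2) star_subalgebra_bounded[OF star_subalgebra] by blast+
  have "has_adjoint p p" "has_adjoint q q"
    using assms(3,4) p q selfadjoint_iff_has_adjoint unfolding is_projection_def by blast+
  then have "adj (\<lambda>x. p x + q x) = (\<lambda>x. p x + q x)" by (intro adj_eqI has_adjoint_plus)
  moreover have "(\<lambda>x. p x + q x) \<circ> (\<lambda>x. p x + q x) = (\<lambda>x. p x + q x)"
    using assms(3-6) unfolding is_projection_def
    by (simp add: fun_eq_iff bounded_op_add[OF p] bounded_op_add[OF q])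
  ultimately have "is_projection (\<lambda>y. \<phi> p y + \<phi> q y)"
    using preserves_projections[OF star_subalgebra_plus[OF star_subalgebra assms(1,2)]]
    unfolding is_projection_def phi_plus[OF assms(1,2)] by blast
  then show ?thesis
    using preserves_projections assms(1-4) bounded_image
    unfolding is_projection_def by (intro idempotent_sum_imp_orthogonal) auto
qed

lemma phi_selfadjoint:
  assumes "T \<in> A" "adj T = T"
  shows "adj (\<phi> T) = \<phi> T" and "\<phi> (T \<circ> T) = \<phi> T \<circ> \<phi> T"
proof -
  have spectrum: "finite (op_spectrum T)"
    using R_star assms unfolding R_star_algebra_def by blast
  obtain R e where fin: "finite R" and real: "\<And>z. z \<in> R \<Longrightarrow> z \<in> \<real>"
    and eA: "\<And>z. z \<in> R \<Longrightarrow> e z \<in> A" and proj: "\<And>z. z \<in> R \<Longrightarrow> is_projection (e z)"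
    and orth: "\<And>z w. z \<in> R \<Longrightarrow> w \<in> R \<Longrightarrow> z \<noteq> w \<Longrightarrow> e z \<circ> e w = (\<lambda>x. 0)"
    and T: "T = (\<lambda>x. \<Sum>z\<in>R. scaleC z (e z x))"
    using star_subalgebra_selfadjoint_decomposition[OF star_subalgebra assms spectrum] by blast
  have e_bounded: "bounded_op (e z)" if "z \<in> R" for z
    using star_subalgebra_bounded[OF star_subalgebra eA[OF that]] .
  have phi_bounded: "bounded_op (\<phi> (e z))" if "z \<in> R" for z
    using bounded_image[OF eA[OF that]] .
  have phi_proj: "is_projection (\<phi> (e z))" if "z \<in> R" for z
    using preserves_projections[OF eA[OF that] proj[OF that]] .
  have phi_orth: "\<phi> (e z) \<circ> \<phi> (e w) = (\<lambda>x. 0)" if "z \<in> R" "w \<in> R" "z \<noteq> w" for z w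
    using phi_orthogonal_projections[OF eA eA proj proj orth orth] that by blast
  have phi_T: "\<phi> T = (\<lambda>y. \<Sum>z\<in>R. scaleC z (\<phi> (e z) y))"
    unfolding T by (rule phi_sum[OF fin eA])
  have "has_adjoint (\<phi> (e z)) (\<phi> (e z))" if "z \<in> R" for z
    using phi_proj[OF that] phi_bounded[OF that] selfadjoint_iff_has_adjoint
    unfolding is_projection_def by blast
  then have "has_adjoint (\<phi> T) (\<lambda>y. \<Sum>z\<in>R. scaleC (cnj z) (\<phi> (e z) y))"
    unfolding phi_T by (intro has_adjoint_sum has_adjoint_scaleC)
  from adj_eqI[OF this] show "adj (\<phi> T) = \<phi> T"
    using real by (simp add: phi_T Reals_cnj_iff cong: sum.cong)
  have "T \<circ> T = (\<lambda>x. \<Sum>z\<in>R. scaleC (z * z) (e z x))"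
    unfolding T using proj unfolding is_projection_def
    by (intro comp_sum_orthogonal_idempotents fin e_bounded orth) blast+
  then have "\<phi> (T \<circ> T) = (\<lambda>y. \<Sum>z\<in>R. scaleC (z * z) (\<phi> (e z) y))"
    by (simp add: phi_sum[OF fin eA])
  also have "\<dots> = \<phi> T \<circ> \<phi> T"
    unfolding phi_T using phi_proj unfolding is_projection_def
    by (intro comp_sum_orthogonal_idempotents[symmetric] fin phi_bounded phi_orth) blast+
  finally show "\<phi> (T \<circ> T) = \<phi> T \<circ> \<phi> T" .
qed

text \<open>Polarisation: \<open>a b + b a = (a + b)\<^sup>2 - a\<^sup>2 - b\<^sup>2\<close>.\<close>

lemma phi_anticommutator:
  assumes a: "a \<in> A" "adj a = a" and b: "b \<in> A" "adj b = b"
  shows "\<phi> (\<lambda>z. a (b z) + b (a z)) = (\<lambda>y. \<phi> a (\<phi> b y) + \<phi> b (\<phi> a y))"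
proof -
  have A: "star_subalgebra A" by (rule star_subalgebra)
  have ab: "bounded_op a" "bounded_op b" using a b star_subalgebra_bounded[OF A] by blast+
  have phi_ab: "bounded_op (\<phi> a)" "bounded_op (\<phi> b)" using a b bounded_image by blast+
  define c where "c = (\<lambda>z. a z + b z)"
  define U V W where "U = a \<circ> a" and "V = b \<circ> b" and "W = (\<lambda>z. a (b z) + b (a z))"
  have cA: "c \<in> A" unfolding c_def using a b by (intro star_subalgebra_plus[OF A])
  have "adj c = c"
    unfolding c_def using a b ab selfadjoint_iff_has_adjoint by (intro adj_eqI has_adjoint_plus) blast+
  have UVW: "U \<in> A" "V \<in> A" "W \<in> A"
    unfolding U_def V_def W_def using a b
    by (simp_all add: star_subalgebra_comp[OF A] star_subalgebra_plus[OF A]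
        star_subalgebra_comp[OF A, unfolded comp_def])
  have "c \<circ> c = (\<lambda>z. U z + V z + W z)"
    unfolding c_def U_def V_def W_def
    by (simp add: fun_eq_iff bounded_op_add[OF ab(1)] bounded_op_add[OF ab(2)] algebra_simps)
  then have "\<phi> (c \<circ> c) = (\<lambda>y. \<phi> U y + \<phi> V y + \<phi> W y)"
    using UVW by (simp add: phi_plus star_subalgebra_plus[OF A])
  moreover have "\<phi> (c \<circ> c) = (\<lambda>y. \<phi> a (\<phi> a y) + \<phi> b (\<phi> b y) + (\<phi> a (\<phi> b y) + \<phi> b (\<phi> a y)))"
    unfolding phi_selfadjoint(2)[OF cA \<open>adj c = c\<close>] unfolding c_def phi_plus[OF a(1) b(1)]
    by (simp add: fun_eq_iff bounded_op_add[OF phi_ab(1)] bounded_op_add[OF phi_ab(2)] algebra_simps)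
  moreover have "\<phi> U = \<phi> a \<circ> \<phi> a" "\<phi> V = \<phi> b \<circ> \<phi> b"
    unfolding U_def V_def using phi_selfadjoint(2) a b by blast+
  ultimately show ?thesis unfolding W_def by (simp add: fun_eq_iff)
qed

lemma phi_jordan:
  assumes "x \<in> A"
  shows "\<phi> (adj x) = adj (\<phi> x)" and "\<phi> (x \<circ> x) = \<phi> x \<circ> \<phi> x"
proof -
  have A: "star_subalgebra A" by (rule star_subalgebra)
  obtain a b where a: "a \<in> A" "adj a = a" and b: "b \<in> A" "adj b = b"
    and x: "x = (\<lambda>z. a z + scaleC \<i> (b z))"
    using star_subalgebra_cartesian_decomposition[OF A assms] by metis
  have ab: "bounded_op a" "bounded_op b" using a b star_subalgebra_bounded[OF A] by blast+
  have phi_ab: "bounded_op (\<phi> a)" "bounded_op (\<phi> b)" using a b bounded_image by blast+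
  have phi_x: "\<phi> x = (\<lambda>y. \<phi> a y + scaleC \<i> (\<phi> b y))"
    unfolding x using a b by (simp add: phi_plus phi_scaleC star_subalgebra_scaleC[OF A])
  have "\<phi> (adj x) = (\<lambda>y. \<phi> a y - scaleC \<i> (\<phi> b y))"
    unfolding x adj_plus_i[OF ab a(2) b(2)]
    using a b by (simp add: phi_diff phi_scaleC star_subalgebra_scaleC[OF A])
  also have "\<dots> = adj (\<phi> x)"
    unfolding phi_x using phi_selfadjoint(1) a b by (simp add: adj_plus_i[OF phi_ab])
  finally show "\<phi> (adj x) = adj (\<phi> x)" .
  define U V W where "U = a \<circ> a" and "V = b \<circ> b" and "W = (\<lambda>z. a (b z) + b (a z))"
  have UVW: "U \<in> A" "V \<in> A" "W \<in> A"
    unfolding U_def V_def W_def using a b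
    by (simp_all add: star_subalgebra_comp[OF A] star_subalgebra_plus[OF A]
        star_subalgebra_comp[OF A, unfolded comp_def])
  have "x \<circ> x = (\<lambda>z. U z - V z + scaleC \<i> (W z))"
    unfolding x square_plus_i[OF ab] U_def V_def W_def by simp
  then have "\<phi> (x \<circ> x) = (\<lambda>y. \<phi> U y - \<phi> V y + scaleC \<i> (\<phi> W y))"
    using UVW by (simp add: phi_plus phi_diff phi_scaleC star_subalgebra_diff[OF A]
        star_subalgebra_scaleC[OF A])
  also have "\<dots> = \<phi> x \<circ> \<phi> x"
    unfolding phi_x square_plus_i[OF phi_ab] U_def V_def W_def
    using phi_selfadjoint(2) phi_anticommutator a b by simp
  finally show "\<phi> (x \<circ> x) = \<phi> x \<circ> \<phi> x" .
qed

end

theorem proposition8p6: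
  fixes A :: "('h::complex_hilbert \<Rightarrow> 'h) set"
    and B :: "('k::complex_hilbert \<Rightarrow> 'k) set"
    and \<phi> :: "('h \<Rightarrow> 'h) \<Rightarrow> ('k \<Rightarrow> 'k)"
  assumes "R_star_algebra A" and "R_star_algebra B"
    and "\<forall>T\<in>A. \<phi> T \<in> B"
    and "linear_on_ops A \<phi>"
    and "\<forall>p\<in>A. is_projection p \<longrightarrow> is_projection (\<phi> p)"
  shows "\<forall>x\<in>A. \<phi> (adj x) = adj (\<phi> x) \<and> \<phi> (x \<circ> x) = \<phi> x \<circ> \<phi> x"
proof -
  have "star_subalgebra B" using assms(2) unfolding R_star_algebra_def by blast
  then interpret projection_preserving_map A \<phi>
    using assms(1,3-5) by unfold_locales (auto intro: star_subalgebra_bounded)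
  show ?thesis using phi_jordan by blast
qed

end
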